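(* Consider Algorithm SS-SQP (described in the context) under the standing assumptions (A1), (A2). Let $\kappa_l>0$ be a constant such that for all $k$, $\Delta l(x_k,\bar\tau_k,\bar g_k,\bar d_k)\ge\kappa_l\bar\tau_k(\|\bar d_k\|^2+\|c_k\|)$ and $\Delta l(x_k,\tau_k,\nabla f_k,d_k)\ge\kappa_l\tau_k(\|d_k\|^2+\|c_k\|)$ (such a constant exists). Then for all $k\in\mathbb{N}$: (1) if $\|\bar g_k-\nabla f_k\|\le\kappa_{\mathrm{FO}}\alpha_k\sqrt{\Delta l(x_k,\bar\tau_k,\bar g_k,\bar d_k)}$, then $$|\nabla f_k^Td_k-\bar g_k^T\bar d_k|\le\left(\frac{(1+\kappa_H\zeta^{-1})\kappa_{\mathrm{FO}}\alpha_k}{\sqrt{\kappa_l\bar\tau_k}}+\frac{\kappa_{\mathrm{FO}}^2\alpha_k^2}{\zeta}\right)\Delta l(x_k,\bar\tau_k,\bar g_k,\bar d_k)$$ and $$|d_k^TH_kd_k-\bar d_k^TH_k\bar d_k|\le\left(\frac{2\kappa_H\zeta^{-1}\kappa_{\mathrm{FO}}\alpha_k}{\sqrt{\kappa_l\bar\tau_k}}+\frac{\kappa_H\kappa_{\mathrm{FO}}^2\alpha_k^2}{\zeta^2}\right)\Delta l(x_k,\bar\tau_k,\bar g_k,\bar d_k);$$ (2) if $\|\bar g_k-\nabla f_k\|\le\epsilon_g$, then $$|\nabla f_k^Td_k-\bar g_k^T\bar d_k|\le\frac{(1+\kappa_H\zeta^{-1})\epsilon_g}{\sqrt{\kappa_l\tau_k}}\sqrt{\Delta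 l(x_k,\tau_k,\nabla f_k,d_k)}+\zeta^{-1}\epsilon_g^2$$ and $$|d_k^TH_kd_k-\bar d_k^TH_k\bar d_k|\le\frac{2\kappa_H\zeta^{-1}\epsilon_g}{\sqrt{\kappa_l\tau_k}}\sqrt{\Delta l(x_k,\tau_k,\nabla f_k,d_k)}+\kappa_H\zeta^{-2}\epsilon_g^2.$$
   Context: Problem: $\min_{x\in\mathbb{R}^n}f(x)$ s.t. $c(x)=0$ with $f,c$ continuously differentiable, $c:\mathbb{R}^n\to\mathbb{R}^m$, $m\le n$; $\nabla f_k=\nabla f(x_k)$, $c_k=c(x_k)$, $J_k=\nabla c(x_k)^T$; $\|\cdot\|$ Euclidean norm. $\Delta l(x,\tau,g,d)=-\tau g^Td+\|c(x)\|_1$. $\kappa_{\mathrm{FO}},\epsilon_g\ge0$ are constants (first-order oracle parameters). Standing assumption (A1): there is an open convex set $\mathcal{X}$ containing all iterates and trial iterates; $f$ bounded below, $\nabla f$ $L$-Lipschitz and bounded, $c$ bounded, each $\nabla c_i$ Lipschitz and bounded on $\mathcal{X}$; singular values of $\nabla c(x)^T$ bounded away from zero on $\mathcal{X}$. (A2): $H_k$ symmetric, chosen independently of $\bar g_k$, $\|H_k\|\le\kappa_H$, $u^TH_ku\ge\zeta\|u\|^2$ for $u\in\mathrm{Null}(J_k)$, $\kappa_H,\zeta>0$. Algorithm SS-SQP: inputs $x_0$, $\bar\tau_{-1}>0$, $\alpha_{\max}\in(0,1]$, $\alpha_0\in(0,\alpha_{\max}]$, $\epsilon_f\ge0$, $\gamma,\theta,\sigma,\epsilon_\tau\in(0,1)$.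 At iteration $k$: random gradient estimate $\bar g_k$; solve $\begin{bmatrix}H_k & J_k^T\\ J_k&0\end{bmatrix}\begin{bmatrix}\bar d_k\\ \bar y_k\end{bmatrix}=-\begin{bmatrix}\bar g_k\\ c_k\end{bmatrix}$; $\bar\tau_k^{\rm trial}=\infty$ if $\bar g_k^T\bar d_k+\max\{\bar d_k^TH_k\bar d_k,0\}\le0$, else $(1-\sigma)\|c_k\|_1/(\bar g_k^T\bar d_k+\max\{\bar d_k^TH_k\bar d_k,0\})$; $\bar\tau_k=\bar\tau_{k-1}$ if $\bar\tau_{k-1}\le\bar\tau_k^{\rm trial}$, else $\min\{(1-\epsilon_\tau)\bar\tau_{k-1},\bar\tau_k^{\rm trial}\}$; $x_k^+=x_k+\alpha_k\bar d_k$; with objective estimates $\bar f$ and $\bar\phi(x,\tau;\xi)=\tau\bar f(x;\xi)+\|c(x)\|_1$, set $x_{k+1}=x_k^+$, $\alpha_{k+1}=\min\{\alpha_{\max},\alpha_k/\gamma\}$ if $\bar\phi(x_k^+,\bar\tau_k;\xi_k^+)\le\bar\phi(x_k,\bar\tau_k;\xi_k^0)-\alpha_k\theta\Delta l(x_k,\bar\tau_k,\bar g_k,\bar d_k)+2\bar\tau_k\epsilon_f$, else $x_{k+1}=x_k$, $\alpha_{k+1}=\gamma\alpha_k$. Deterministic quantities: $(d_k,y_k)$ solves the same system with $\bar g_k$ replaced by $\nabla f_k$; $\tau_k^{\rm trial}=\infty$ if $\nabla f_k^Td_k+\max\{d_k^TH_kd_k,0\}\le0$, else $(1-\sigma)\|c_k\|_1/(\nabla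 f_k^Td_k+\max\{d_k^TH_kd_k,0\})$; $\tau_k=\bar\tau_k$ if $\bar\tau_k\le\tau_k^{\rm trial}$, else $\tau_k=\min\{(1-\epsilon_\tau)\bar\tau_k,\tau_k^{\rm trial}\}$. *)

theory Defs
  imports "HOL-Analysis.Analysis"
begin

text \<open>Vectors of R^n are real^'n, vectors of R^m are real^'m; the Jacobian
  J(x) = nabla c(x)^T is an m x n matrix real^'n^'m.\<close>

definition l1norm :: "real^'m \<Rightarrow> real" where
  "l1norm v = (\<Sum>i\<in>UNIV. \<bar>v $ i\<bar>)"

definition Delta_l :: "real^'m \<Rightarrow> real \<Rightarrow> real^'n \<Rightarrow> real^'n \<Rightarrow> real" where
  "Delta_l cx tau g d = - tau * (g \<bullet> d) + l1norm cx"

text \<open>Merit parameter update. The trial value is +infinity when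
  g^T d + max(d^T H d,0) <= 0; then tau_prev <= trial always holds.\<close>
definition tau_update :: "real \<Rightarrow> real \<Rightarrow> real \<Rightarrow> real^'n \<Rightarrow> real^'n \<Rightarrow> real^'n^'n \<Rightarrow> real^'m \<Rightarrow> real" where
  "tau_update sig eps_tau tau_prev g d H cx =
     (let den = g \<bullet> d + max (d \<bullet> (H *v d)) 0 in
      if den \<le> 0 then tau_prev
      else (let trial = (1 - sig) * l1norm cx / den in
            if tau_prev \<le> trial then tau_prev else min ((1 - eps_tau) * tau_prev) trial))"

definition sqp_system :: "real^'n^'n \<Rightarrow> real^'n^'m \<Rightarrow> real^'n \<Rightarrow> real^'m \<Rightarrow> real^'n \<Rightarrow> real^'m \<Rightarrow> bool" where
  "sqp_system H J g cx d y \<longleftrightarrow> H *v d + transpose J *v y = - g \<and> J *v d = - cx"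

definition problem_data :: "(real^'n \<Rightarrow> real) \<Rightarrow> (real^'n \<Rightarrow> real^'n) \<Rightarrow> (real^'n \<Rightarrow> real^'m) \<Rightarrow> (real^'n \<Rightarrow> real^'n^'m) \<Rightarrow> bool" where
  "problem_data f gf c Jc \<longleftrightarrow>
     CARD('m) \<le> CARD('n) \<and>
     (\<forall>x. (f has_derivative (\<lambda>h. gf x \<bullet> h)) (at x)) \<and> continuous_on UNIV gf \<and>
     (\<forall>x. (c has_derivative (\<lambda>h. Jc x *v h)) (at x)) \<and> continuous_on UNIV Jc"

text \<open>Row i of Jc x is nabla c_i(x). Singular values of nabla c(x)^T bounded away from zero
  is written as ||J(x)^T v|| >= s ||v|| for all v (m <= n).\<close>
definition assumption_A1 :: "(real^'n) set \<Rightarrow> (nat \<Rightarrow> real^'n) \<Rightarrow> (nat \<Rightarrow> real^'n) \<Rightarrow> (real^'n \<Rightarrow> real) \<Rightarrow> (real^'n \<Rightarrow> real^'n) \<Rightarrow> (real^'n \<Rightarrow> real^'m) \<Rightarrow> (real^'n \<Rightarrow> real^'n^'m) \<Rightarrow> bool" where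
  "assumption_A1 X xs xp f gf c Jc \<longleftrightarrow>
     open X \<and> convex X \<and> (\<forall>k. xs k \<in> X) \<and> (\<forall>k. xp k \<in> X) \<and>
     (\<exists>flow. \<forall>x\<in>X. flow \<le> f x) \<and>
     (\<exists>L. \<forall>x\<in>X. \<forall>y\<in>X. norm (gf x - gf y) \<le> L * norm (x - y)) \<and>
     (\<exists>B. \<forall>x\<in>X. norm (gf x) \<le> B) \<and>
     (\<exists>B. \<forall>x\<in>X. norm (c x) \<le> B) \<and>
     (\<forall>i. \<exists>L. \<forall>x\<in>X. \<forall>y\<in>X. norm (Jc x $ i - Jc y $ i) \<le> L * norm (x - y)) \<and>
     (\<forall>i. \<exists>B. \<forall>x\<in>X. norm (Jc x $ i) \<le> B) \<and>
     (\<exists>s>0. \<forall>x\<in>X. \<forall>v. s * norm v \<le> norm (transpose (Jc x) *v v))"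

definition assumption_A2 :: "(nat \<Rightarrow> real^'n^'n) \<Rightarrow> (nat \<Rightarrow> real^'n^'m) \<Rightarrow> real \<Rightarrow> real \<Rightarrow> bool" where
  "assumption_A2 H J kappaH zeta \<longleftrightarrow> kappaH > 0 \<and> zeta > 0 \<and>
     (\<forall>k. transpose (H k) = H k \<and> onorm (\<lambda>v. H k *v v) \<le> kappaH \<and>
          (\<forall>u. J k *v u = 0 \<longrightarrow> zeta * (norm u)\<^sup>2 \<le> u \<bullet> (H k *v u)))"

text \<open>One realization of Algorithm SS-SQP. gb k is the realized gradient estimate,
  fb the objective estimator with realized sample values xi0 k, xip k.\<close>
definition ss_sqp_run ::
  "(real^'n \<Rightarrow> real^'m) \<Rightarrow> (real^'n \<Rightarrow> real^'n^'m) \<Rightarrow>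
   (real^'n \<Rightarrow> 'w \<Rightarrow> real) \<Rightarrow> (nat \<Rightarrow> 'w) \<Rightarrow> (nat \<Rightarrow> 'w) \<Rightarrow>
   real \<Rightarrow> real \<Rightarrow> real \<Rightarrow> real \<Rightarrow> real \<Rightarrow> real \<Rightarrow> real \<Rightarrow>
   (nat \<Rightarrow> real^'n^'n) \<Rightarrow> (nat \<Rightarrow> real^'n) \<Rightarrow> (nat \<Rightarrow> real^'n) \<Rightarrow> (nat \<Rightarrow> real^'n) \<Rightarrow> (nat \<Rightarrow> real^'m) \<Rightarrow>
   (nat \<Rightarrow> real) \<Rightarrow> (nat \<Rightarrow> real) \<Rightarrow> bool" where
  "ss_sqp_run c Jc fb xi0 xip taubm1 alpha_max eps_f gamma theta sig eps_tau
      H x gb db yb taub alpha \<longleftrightarrow>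
     taubm1 > 0 \<and> 0 < alpha_max \<and> alpha_max \<le> 1 \<and> 0 < alpha 0 \<and> alpha 0 \<le> alpha_max \<and>
     eps_f \<ge> 0 \<and> 0 < gamma \<and> gamma < 1 \<and> 0 < theta \<and> theta < 1 \<and>
     0 < sig \<and> sig < 1 \<and> 0 < eps_tau \<and> eps_tau < 1 \<and>
     (\<forall>k. sqp_system (H k) (Jc (x k)) (gb k) (c (x k)) (db k) (yb k)) \<and>
     taub 0 = tau_update sig eps_tau taubm1 (gb 0) (db 0) (H 0) (c (x 0)) \<and>
     (\<forall>k. taub (Suc k) = tau_update sig eps_tau (taub k) (gb (Suc k)) (db (Suc k)) (H (Suc k)) (c (x (Suc k)))) \<and>
     (\<forall>k. let xplus = x k + alpha k *\<^sub>R db k in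
          if taub k * fb xplus (xip k) + l1norm (c xplus)
             \<le> taub k * fb (x k) (xi0 k) + l1norm (c (x k))
                - alpha k * theta * Delta_l (c (x k)) (taub k) (gb k) (db k) + 2 * taub k * eps_f
          then x (Suc k) = xplus \<and> alpha (Suc k) = min alpha_max (alpha k / gamma)
          else x (Suc k) = x k \<and> alpha (Suc k) = gamma * alpha k)"

end

theory Submission
  imports Defs
begin

(* The exact step (d, y) and the stochastic step (db, yb) solve saddle-point systems that differ
   only in the gradient, so u = d - db lies in Null(J) and u^T H u = (gb - g)^T u.  Coercivity of H
   on Null(J) gives norm u <= norm (gb - g) / zeta.  Expanding g^T d - gb^T db and d^T H d - db^T H db
   around db (or, exchanging the roles of the two systems, around d) bounds both differences by
   norm (gb - g) times the step length plus a quadratic term, and the model reduction bound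
   Delta_l >= kappa_l tau norm d ^ 2 converts the step length into sqrt Delta_l / sqrt (kappa_l tau).
   The merit parameters stay positive since the tau-update only decreases tau when c <> 0. *)

lemma inner_transpose_mult_null:
  fixes J :: "real^'n^'m"
  assumes "J *v u = 0"
  shows "u \<bullet> (transpose J *v y) = 0"
  by (metis assms dot_lmul_matrix inner_commute inner_zero_right transpose_matrix_vector)

lemma sqp_system_inner_null:
  assumes "sqp_system H J g cx d y" and "J *v u = 0"
  shows "g \<bullet> u = - (u \<bullet> (H *v d))"
proof -
  have "g = - (H *v d + transpose J *v y)"
    using assms(1) unfolding sqp_system_def by (metis minus_minus)
  then have "u \<bullet> g = - (u \<bullet> (H *v d) + u \<bullet> (transpose J *v y))"
    by (simp only: inner_add_right inner_minus_right)
  then show ?thesis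
    using inner_transpose_mult_null[OF assms(2)] by (simp add: inner_commute)
qed

lemma l1norm_nonneg: "0 \<le> l1norm v"
  unfolding l1norm_def by (simp add: sum_nonneg)

lemma l1norm_eq_0_iff: "l1norm (v::real^'m) = 0 \<longleftrightarrow> v = 0"
  unfolding l1norm_def by (simp add: sum_nonneg_eq_0_iff vec_eq_iff)

lemma tau_update_pos:
  assumes "0 < tau" and "sig < 1" and "eps_tau < 1"
    and sqp: "sqp_system H J g cx d y"
    and psd: "\<And>u. J *v u = 0 \<Longrightarrow> 0 \<le> u \<bullet> (H *v u)"
  shows "0 < tau_update sig eps_tau tau g d H cx"
proof -
  have "0 < l1norm cx" if den_pos: "0 < g \<bullet> d + max (d \<bullet> (H *v d)) 0"
  proof (rule ccontr)
    assume "\<not> 0 < l1norm cx"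
    then have "cx = 0"
      using l1norm_nonneg[of cx] l1norm_eq_0_iff[of cx] by linarith
    then have "J *v d = 0"
      using sqp by (simp add: sqp_system_def)
    then have "g \<bullet> d = - (d \<bullet> (H *v d))" and "0 \<le> d \<bullet> (H *v d)"
      using sqp_system_inner_null[OF sqp] psd by auto
    then show False
      using den_pos by simp
  qed
  then show ?thesis
    using assms(1-3) by (auto simp: tau_update_def Let_def min_def)
qed

lemma ss_sqp_run_merit_parameter_pos:
  assumes run: "ss_sqp_run c Jc fb xi0 xip taubm1 alpha_max eps_f gamma theta sig eps_tau
                  H x gb db yb taub alpha"
    and psd: "\<And>k u. Jc (x k) *v u = 0 \<Longrightarrow> 0 \<le> u \<bullet> (H k *v u)"
  shows "0 < taub k"
proof -
  have params: "0 < taubm1" "sig < 1" "eps_tau < 1"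
    and sqp: "\<And>k. sqp_system (H k) (Jc (x k)) (gb k) (c (x k)) (db k) (yb k)"
    and taub_0: "taub 0 = tau_update sig eps_tau taubm1 (gb 0) (db 0) (H 0) (c (x 0))"
    and taub_Suc: "\<And>k. taub (Suc k)
          = tau_update sig eps_tau (taub k) (gb (Suc k)) (db (Suc k)) (H (Suc k)) (c (x (Suc k)))"
    using run unfolding ss_sqp_run_def by auto
  show ?thesis
  proof (induction k)
    case 0
    show ?case
      unfolding taub_0 using params sqp psd by (rule tau_update_pos)
  next
    case (Suc k)
    show ?case
      unfolding taub_Suc using Suc params(2,3) sqp psd by (rule tau_update_pos)
  qed
qed

lemma norm_le_sqrt_div_sqrt:
  fixes v :: "'a::real_normed_vector" and w :: "'b::real_normed_vector"
  assumes "0 < a" and "a * ((norm v)\<^sup>2 + norm w) \<le> D"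
  shows "norm v \<le> sqrt D / sqrt a" and "0 \<le> D"
proof -
  have "a * (norm v)\<^sup>2 \<le> D"
    using assms by (smt (verit) mult_left_mono norm_ge_zero)
  then have "(norm v)\<^sup>2 \<le> D / a"
    using \<open>0 < a\<close> by (simp add: field_simps)
  then show "norm v \<le> sqrt D / sqrt a"
    by (metis real_le_rsqrt real_sqrt_divide)
  show "0 \<le> D"
    using assms by (smt (verit) mult_nonneg_nonneg norm_ge_zero zero_le_power2)
qed

lemma error_bound_mono:
  fixes A B N e n m :: real
  assumes "X \<le> A * N * n + B * N\<^sup>2" and "0 \<le> A" and "0 \<le> B"
    and "0 \<le> N" and "N \<le> e" and "0 \<le> n" and "n \<le> m"
  shows "X \<le> A * e * m + B * e\<^sup>2"
proof -
  have "A * N * n \<le> A * e * m"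
    using assms(2-7) by (intro mult_mono) auto
  moreover have "B * N\<^sup>2 \<le> B * e\<^sup>2"
    using assms(3-5) by (intro mult_left_mono power_mono) auto
  ultimately show ?thesis
    using assms(1) by linarith
qed

lemma scaled_sqrt_product_eq:
  fixes A B t s r :: real
  shows "A * (t * s) * (s / r) + B * (t * s)\<^sup>2 = (A * t / r + B * t\<^sup>2) * s\<^sup>2"
  by (simp add: power2_eq_square algebra_simps)

locale sqp_hessian =
  fixes H :: "real^'n^'n" and J :: "real^'n^'m" and kappaH zeta :: real
  assumes symmetric: "transpose H = H"
    and onorm_le: "onorm (\<lambda>v. H *v v) \<le> kappaH"
    and null_space_coercive: "\<And>u. J *v u = 0 \<Longrightarrow> zeta * (norm u)\<^sup>2 \<le> u \<bullet> (H *v u)"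
    and zeta_pos: "0 < zeta"
begin

lemma kappaH_nonneg: "0 \<le> kappaH"
  using onorm_le onorm_pos_le[OF matrix_vector_mul_bounded_linear[of H]] by linarith

lemma null_space_nonneg: "J *v u = 0 \<Longrightarrow> 0 \<le> u \<bullet> (H *v u)"
  using null_space_coercive[of u] zeta_pos by (smt (verit) mult_nonneg_nonneg zero_le_power2)

lemma inner_H_commute: "a \<bullet> (H *v b) = b \<bullet> (H *v a)"
  by (metis symmetric dot_lmul_matrix inner_commute transpose_matrix_vector)

lemma abs_inner_H_le: "\<bar>a \<bullet> (H *v b)\<bar> \<le> kappaH * norm a * norm b"
proof -
  have "\<bar>a \<bullet> (H *v b)\<bar> \<le> norm a * norm (H *v b)"
    by (rule Cauchy_Schwarz_ineq2)
  also have "\<dots> \<le> norm a * (kappaH * norm b)"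
    using onorm[OF matrix_vector_mul_bounded_linear[of H], of b]
      mult_right_mono[OF onorm_le norm_ge_zero[of b]]
    by (intro mult_left_mono) auto
  finally show ?thesis
    by (simp add: mult_ac)
qed

lemma step_diff_norm_le:
  assumes "sqp_system H J g cx d y" and "sqp_system H J gb cx db yb"
  shows "norm (d - db) \<le> norm (gb - g) / zeta"
proof -
  define u where "u = d - db"
  have null: "J *v u = 0"
    using assms by (simp add: sqp_system_def u_def matrix_vector_mult_diff_distrib)
  have "u \<bullet> (H *v u) = (gb - g) \<bullet> u"
    using sqp_system_inner_null[OF assms(1) null] sqp_system_inner_null[OF assms(2) null]
    by (simp add: u_def inner_diff_left inner_diff_right matrix_vector_mult_diff_distrib)
  also have "\<dots> \<le> norm (gb - g) * norm u"
    by (metis Cauchy_Schwarz_ineq2 abs_le_D1 mult.commute)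
  finally have "zeta * (norm u)\<^sup>2 \<le> norm (gb - g) * norm u"
    using null_space_coercive[OF null] by linarith
  then show ?thesis
    using zeta_pos by (cases "u = 0") (auto simp: u_def power2_eq_square field_simps)
qed

lemma step_diff_inner_H_le:
  assumes "sqp_system H J g cx d y" and "sqp_system H J gb cx db yb"
  shows "\<bar>(d - db) \<bullet> (H *v v)\<bar> \<le> kappaH / zeta * norm (gb - g) * norm v"
proof -
  have "\<bar>(d - db) \<bullet> (H *v v)\<bar> \<le> kappaH * norm (d - db) * norm v"
    by (rule abs_inner_H_le)
  also have "\<dots> \<le> kappaH * (norm (gb - g) / zeta) * norm v"
    using step_diff_norm_le[OF assms] kappaH_nonneg by (intro mult_right_mono mult_left_mono) auto
  finally show ?thesis
    by simp
qed

lemma gradient_step_diff_le: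
  assumes exact: "sqp_system H J g cx d y" and inexact: "sqp_system H J gb cx db yb"
  shows "\<bar>g \<bullet> d - gb \<bullet> db\<bar>
           \<le> (1 + kappaH / zeta) * norm (gb - g) * norm db + (norm (gb - g))\<^sup>2 / zeta"
proof -
  define u where "u = d - db"
  define \<delta> where "\<delta> = gb - g"
  have null: "J *v u = 0"
    using assms by (simp add: sqp_system_def u_def matrix_vector_mult_diff_distrib)
  have "g \<bullet> d - gb \<bullet> db = gb \<bullet> u - \<delta> \<bullet> db - \<delta> \<bullet> u"
    by (simp add: u_def \<delta>_def inner_diff_left inner_diff_right)
  also have "gb \<bullet> u = - (u \<bullet> (H *v db))"
    by (rule sqp_system_inner_null[OF inexact null])
  finally have "\<bar>g \<bullet> d - gb \<bullet> db\<bar> \<le> \<bar>u \<bullet> (H *v db)\<bar> + norm \<delta> * norm db + norm \<delta> * norm u"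
    using Cauchy_Schwarz_ineq2[of \<delta> db] Cauchy_Schwarz_ineq2[of \<delta> u] by linarith
  also have "\<dots> \<le> kappaH / zeta * norm \<delta> * norm db + norm \<delta> * norm db + norm \<delta> * (norm \<delta> / zeta)"
    using step_diff_inner_H_le[OF exact inexact, of db] step_diff_norm_le[OF exact inexact]
    unfolding u_def \<delta>_def by (intro add_mono mult_left_mono) auto
  finally show ?thesis
    by (simp add: \<delta>_def power2_eq_square algebra_simps)
qed

lemma curvature_diff_le:
  assumes exact: "sqp_system H J g cx d y" and inexact: "sqp_system H J gb cx db yb"
  shows "\<bar>d \<bullet> (H *v d) - db \<bullet> (H *v db)\<bar>
           \<le> 2 * kappaH / zeta * norm (gb - g) * norm db + kappaH * (norm (gb - g))\<^sup>2 / zeta\<^sup>2"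
proof -
  define u where "u = d - db"
  define \<delta> where "\<delta> = gb - g"
  have "d \<bullet> (H *v d) - db \<bullet> (H *v db) = 2 * (u \<bullet> (H *v db)) + u \<bullet> (H *v u)"
    using inner_H_commute[of db u]
    by (simp add: u_def matrix_vector_mult_diff_distrib inner_diff_left inner_diff_right)
  moreover have "\<bar>u \<bullet> (H *v db)\<bar> \<le> kappaH / zeta * norm \<delta> * norm db"
    using step_diff_inner_H_le[OF exact inexact] by (simp add: u_def \<delta>_def)
  moreover have "\<bar>u \<bullet> (H *v u)\<bar> \<le> kappaH / zeta * norm \<delta> * norm u"
    using step_diff_inner_H_le[OF exact inexact] by (simp add: u_def \<delta>_def)
  moreover have "kappaH / zeta * norm \<delta> * norm u \<le> kappaH / zeta * norm \<delta> * (norm \<delta> / zeta)"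
    using step_diff_norm_le[OF exact inexact] kappaH_nonneg zeta_pos
    by (intro mult_left_mono) (auto simp: u_def \<delta>_def)
  ultimately have "\<bar>d \<bullet> (H *v d) - db \<bullet> (H *v db)\<bar>
                     \<le> 2 * (kappaH / zeta * norm \<delta> * norm db) + kappaH / zeta * norm \<delta> * (norm \<delta> / zeta)"
    by linarith
  then show ?thesis
    by (simp add: \<delta>_def power2_eq_square)
qed

lemma estimates_under_adaptive_error:
  assumes exact: "sqp_system H J g cx d y" and inexact: "sqp_system H J gb cx db yb"
    and "0 < a" and reduction: "a * ((norm db)\<^sup>2 + norm cx) \<le> D"
    and error: "norm (gb - g) \<le> t * sqrt D"
  shows "\<bar>g \<bullet> d - gb \<bullet> db\<bar> \<le> ((1 + kappaH / zeta) * t / sqrt a + t\<^sup>2 / zeta) * D"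
    and "\<bar>d \<bullet> (H *v d) - db \<bullet> (H *v db)\<bar>
           \<le> (2 * kappaH / zeta * t / sqrt a + kappaH * t\<^sup>2 / zeta\<^sup>2) * D"
proof -
  note db_le = norm_le_sqrt_div_sqrt[OF \<open>0 < a\<close> reduction]
  have scale: "A * (t * sqrt D) * (sqrt D / sqrt a) + B * (t * sqrt D)\<^sup>2 = (A * t / sqrt a + B * t\<^sup>2) * D"
    for A B
    using db_le(2) scaled_sqrt_product_eq[of A t "sqrt D" "sqrt a" B] by simp
  have "\<bar>g \<bullet> d - gb \<bullet> db\<bar>
          \<le> (1 + kappaH / zeta) * (t * sqrt D) * (sqrt D / sqrt a) + (1 / zeta) * (t * sqrt D)\<^sup>2"
  proof (rule error_bound_mono)
    show "\<bar>g \<bullet> d - gb \<bullet> db\<bar>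
            \<le> (1 + kappaH / zeta) * norm (gb - g) * norm db + (1 / zeta) * (norm (gb - g))\<^sup>2"
      using gradient_step_diff_le[OF exact inexact] by simp
  qed (use error db_le(1) kappaH_nonneg zeta_pos in auto)
  then show "\<bar>g \<bullet> d - gb \<bullet> db\<bar> \<le> ((1 + kappaH / zeta) * t / sqrt a + t\<^sup>2 / zeta) * D"
    unfolding scale by simp
  have "\<bar>d \<bullet> (H *v d) - db \<bullet> (H *v db)\<bar>
          \<le> 2 * kappaH / zeta * (t * sqrt D) * (sqrt D / sqrt a) + (kappaH / zeta\<^sup>2) * (t * sqrt D)\<^sup>2"
  proof (rule error_bound_mono)
    show "\<bar>d \<bullet> (H *v d) - db \<bullet> (H *v db)\<bar>
            \<le> 2 * kappaH / zeta * norm (gb - g) * norm db + (kappaH / zeta\<^sup>2) * (norm (gb - g))\<^sup>2"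
      using curvature_diff_le[OF exact inexact] by simp
  qed (use error db_le(1) kappaH_nonneg zeta_pos in auto)
  then show "\<bar>d \<bullet> (H *v d) - db \<bullet> (H *v db)\<bar>
               \<le> (2 * kappaH / zeta * t / sqrt a + kappaH * t\<^sup>2 / zeta\<^sup>2) * D"
    unfolding scale by simp
qed

lemma estimates_under_bounded_error:
  assumes exact: "sqp_system H J g cx d y" and inexact: "sqp_system H J gb cx db yb"
    and "0 < a" and reduction: "a * ((norm d)\<^sup>2 + norm cx) \<le> D"
    and error: "norm (gb - g) \<le> e"
  shows "\<bar>g \<bullet> d - gb \<bullet> db\<bar> \<le> (1 + kappaH / zeta) * e / sqrt a * sqrt D + e\<^sup>2 / zeta"
    and "\<bar>d \<bullet> (H *v d) - db \<bullet> (H *v db)\<bar>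
           \<le> 2 * kappaH / zeta * e / sqrt a * sqrt D + kappaH * e\<^sup>2 / zeta\<^sup>2"
proof -
  note d_le = norm_le_sqrt_div_sqrt(1)[OF \<open>0 < a\<close> reduction]
  have "\<bar>g \<bullet> d - gb \<bullet> db\<bar> \<le> (1 + kappaH / zeta) * e * (sqrt D / sqrt a) + (1 / zeta) * e\<^sup>2"
  proof (rule error_bound_mono)
    show "\<bar>g \<bullet> d - gb \<bullet> db\<bar>
            \<le> (1 + kappaH / zeta) * norm (gb - g) * norm d + (1 / zeta) * (norm (gb - g))\<^sup>2"
      \<comment> \<open>roles of the two systems exchanged, so that the bound is in terms of \<open>norm d\<close>\<close>
      using gradient_step_diff_le[OF inexact exact] by (simp add: abs_minus_commute norm_minus_commute)
  qed (use error d_le kappaH_nonneg zeta_pos in auto)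
  then show "\<bar>g \<bullet> d - gb \<bullet> db\<bar> \<le> (1 + kappaH / zeta) * e / sqrt a * sqrt D + e\<^sup>2 / zeta"
    by simp
  have "\<bar>d \<bullet> (H *v d) - db \<bullet> (H *v db)\<bar>
          \<le> 2 * kappaH / zeta * e * (sqrt D / sqrt a) + (kappaH / zeta\<^sup>2) * e\<^sup>2"
  proof (rule error_bound_mono)
    show "\<bar>d \<bullet> (H *v d) - db \<bullet> (H *v db)\<bar>
            \<le> 2 * kappaH / zeta * norm (gb - g) * norm d + (kappaH / zeta\<^sup>2) * (norm (gb - g))\<^sup>2"
      using curvature_diff_le[OF inexact exact] by (simp add: abs_minus_commute norm_minus_commute)
  qed (use error d_le kappaH_nonneg zeta_pos in auto)
  then show "\<bar>d \<bullet> (H *v d) - db \<bullet> (H *v db)\<bar>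
               \<le> 2 * kappaH / zeta * e / sqrt a * sqrt D + kappaH * e\<^sup>2 / zeta\<^sup>2"
    by simp
qed

end

lemma assumption_A2_sqp_hessian:
  "assumption_A2 H J kappaH zeta \<Longrightarrow> sqp_hessian (H k) (J k) kappaH zeta"
  unfolding assumption_A2_def by unfold_locales auto

theorem lemma3p16:
  fixes f :: "real^'n \<Rightarrow> real" and gf :: "real^'n \<Rightarrow> real^'n"
    and c :: "real^'n \<Rightarrow> real^'m" and Jc :: "real^'n \<Rightarrow> real^'n^'m"
    and fb :: "real^'n \<Rightarrow> 'w \<Rightarrow> real" and xi0 xip :: "nat \<Rightarrow> 'w"
    and H :: "nat \<Rightarrow> real^'n^'n" and x gb db d :: "nat \<Rightarrow> real^'n"
    and yb y :: "nat \<Rightarrow> real^'m" and taub alpha :: "nat \<Rightarrow> real"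
    and X :: "(real^'n) set"
    and taubm1 alpha_max eps_f gamma theta sig eps_tau kappaH zeta kappaFO eps_g kappa_l :: real
  assumes prob: "problem_data f gf c Jc"
    and run: "ss_sqp_run c Jc fb xi0 xip taubm1 alpha_max eps_f gamma theta sig eps_tau
                H x gb db yb taub alpha"
    and A1: "assumption_A1 X x (\<lambda>k. x k + alpha k *\<^sub>R db k) f gf c Jc"
    and A2: "assumption_A2 H (\<lambda>k. Jc (x k)) kappaH zeta"
    and det: "\<forall>k. sqp_system (H k) (Jc (x k)) (gf (x k)) (c (x k)) (d k) (y k)"
    and nonneg: "kappaFO \<ge> 0" "eps_g \<ge> 0"
    and kl_pos: "kappa_l > 0"
    and kl_bar: "\<forall>k. Delta_l (c (x k)) (taub k) (gb k) (db k)
                     \<ge> kappa_l * taub k * ((norm (db k))\<^sup>2 + norm (c (x k)))"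
    and kl_det: "\<forall>k. Delta_l (c (x k)) (tau_update sig eps_tau (taub k) (gf (x k)) (d k) (H k) (c (x k)))
                       (gf (x k)) (d k)
                     \<ge> kappa_l * tau_update sig eps_tau (taub k) (gf (x k)) (d k) (H k) (c (x k))
                         * ((norm (d k))\<^sup>2 + norm (c (x k)))"
  shows "\<forall>k. (let g = gf (x k); Hk = H k; ck = c (x k);
              tau = tau_update sig eps_tau (taub k) g (d k) Hk ck;
              Dlb = Delta_l ck (taub k) (gb k) (db k);
              Dl = Delta_l ck tau g (d k) in
        (norm (gb k - g) \<le> kappaFO * alpha k * sqrt Dlb \<longrightarrow>
           \<bar>g \<bullet> d k - gb k \<bullet> db k\<bar>
             \<le> ((1 + kappaH / zeta) * kappaFO * alpha k / sqrt (kappa_l * taub k)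
                 + kappaFO\<^sup>2 * (alpha k)\<^sup>2 / zeta) * Dlb
         \<and> \<bar>d k \<bullet> (Hk *v d k) - db k \<bullet> (Hk *v db k)\<bar>
             \<le> (2 * kappaH / zeta * kappaFO * alpha k / sqrt (kappa_l * taub k)
                 + kappaH * kappaFO\<^sup>2 * (alpha k)\<^sup>2 / zeta\<^sup>2) * Dlb)
      \<and> (norm (gb k - g) \<le> eps_g \<longrightarrow>
           \<bar>g \<bullet> d k - gb k \<bullet> db k\<bar>
             \<le> (1 + kappaH / zeta) * eps_g / sqrt (kappa_l * tau) * sqrt Dl + eps_g\<^sup>2 / zeta
         \<and> \<bar>d k \<bullet> (Hk *v d k) - db k \<bullet> (Hk *v db k)\<bar>
             \<le> 2 * kappaH / zeta * eps_g / sqrt (kappa_l * tau) * sqrt Dl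
                + kappaH * eps_g\<^sup>2 / zeta\<^sup>2))"
proof (intro allI, goal_cases)
  case (1 k)
  note hessian = assumption_A2_sqp_hessian[OF A2]
  interpret sqp_hessian "H k" "Jc (x k)" kappaH zeta
    by (rule hessian)
  have psd: "\<And>j u. Jc (x j) *v u = 0 \<Longrightarrow> 0 \<le> u \<bullet> (H j *v u)"
    by (rule sqp_hessian.null_space_nonneg[OF hessian])
  have inexact: "sqp_system (H k) (Jc (x k)) (gb k) (c (x k)) (db k) (yb k)"
    and params: "sig < 1" "eps_tau < 1"
    using run unfolding ss_sqp_run_def by auto
  have taub_pos: "0 < taub k"
    using run psd by (rule ss_sqp_run_merit_parameter_pos)
  have tau_pos: "0 < tau_update sig eps_tau (taub k) (gf (x k)) (d k) (H k) (c (x k))"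
    using taub_pos params det psd by (intro tau_update_pos) auto
  have "0 < kappa_l * taub k" and "0 < kappa_l * tau_update sig eps_tau (taub k) (gf (x k)) (d k) (H k) (c (x k))"
    using kl_pos taub_pos tau_pos by simp_all
  note adaptive = estimates_under_adaptive_error[OF det[rule_format] inexact this(1) kl_bar[rule_format],
      where t = "kappaFO * alpha k"]
    and bounded = estimates_under_bounded_error[OF det[rule_format] inexact this(2) kl_det[rule_format],
      where e = eps_g]
  show ?case
    unfolding Let_def
    using adaptive[unfolded power_mult_distrib mult.assoc] bounded
    by (simp add: mult.assoc)
qed

end
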